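(* Let $v$ be a vertex of a finite 2-covered graph of spaces $X$ with incident oriented edges $e_i$, $i\in I$ (so $\tau(e_i)=v$), $|I|\ge1$, with edge maps $\tau_i\colon E_i\looparrowright V$. Suppose $v$ is unfoldable, $v$ is not reducible, and if $|I|=1$ then $V$ has at least one edge. Then exactly one of the following holds: (1) (degenerate) there is a distinguished index $0\in I$ such that $\tau_0\colon E_0\to V$ is not an embedding, and for $i\ne0$ the maps $\tau_i$ are embeddings with pairwise disjoint images; (2) (nondegenerate) $|I|=3$, all $\tau_i$ are embeddings, the images of any two incident edge spaces intersect, and there is a vertex of $V$ lying in the image of all three incident edge spaces.
   Context: A 2-covered graph of spaces $X$ consists of: a finite connected graph $\Gamma_U(X)$, with oriented edges $e$, reversal $\bar e$, and terminal/initial vertices $\tau(e),\iota(e)=\tau(\bar e)$; for each vertex $v$ a finite connected graph $V$; for each edge $e$ a finite connected graph $E=\bar E$ (possibly a point); and for each oriented edge $e$ a combinatorial immersion $\tau_e\colon E\looparrowright V$ where $v=\tau(e)$; such that for each vertex $v$, every edge of $V$ is the image of exactly two edges of $\bigsqcup_{\tau(e)=v}E$. For a vertex $v$ with incident oriented edges $e_i$, $i\in I$, and $J\subseteq I$, put $V_J=\bigcup_{j\in J}\tau_j(E_j)$. The vertex $v$ is unfoldable if for every $J\subseteq I$, either the map $\bigsqcup_{j\in J}E_j\to V_J$ is an isomorphism of graphs or the map $\bigsqcup_{i\in I\setminus J}E_i\to V_{I\setminus J}$ is an isomorphism of graphs. The vertex $v$ is reducible if it has exactly two incident oriented edges and both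 maps $E_i\to V$ are graph isomorphisms. *)

theory Defs
  imports Main
begin

text \<open>Combinatorial graphs in Serre's sense: a vertex set, a set of oriented
edges (darts), a fixed-point-free involution (edge reversal) and a terminal
vertex map.  Loops and multiple edges are allowed.\<close>

record ('v, 'd) sgraph =
  gverts :: "'v set"
  gdarts :: "'d set"
  grev   :: "'d \<Rightarrow> 'd"
  gterm  :: "'d \<Rightarrow> 'v"

definition ginit :: "('v, 'd) sgraph \<Rightarrow> 'd \<Rightarrow> 'v" where
  "ginit G d = gterm G (grev G d)"

definition wf_graph :: "('v, 'd) sgraph \<Rightarrow> bool" where
  "wf_graph G \<longleftrightarrow>
     (\<forall>d\<in>gdarts G. grev G d \<in> gdarts G \<and> grev G d \<noteq> d \<and>
                   grev G (grev G d) = d \<and> gterm G d \<in> gverts G)"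

definition finite_graph :: "('v, 'd) sgraph \<Rightarrow> bool" where
  "finite_graph G \<longleftrightarrow> wf_graph G \<and> finite (gverts G) \<and> finite (gdarts G)"

definition connected_graph :: "('v, 'd) sgraph \<Rightarrow> bool" where
  "connected_graph G \<longleftrightarrow> gverts G \<noteq> {} \<and>
     (\<forall>u\<in>gverts G. \<forall>w\<in>gverts G.
        (u, w) \<in> {(ginit G d, gterm G d) | d. d \<in> gdarts G}\<^sup>*)"

definition graph_morph ::
  "('v, 'd) sgraph \<Rightarrow> ('w, 'e) sgraph \<Rightarrow> ('v \<Rightarrow> 'w) \<Rightarrow> ('d \<Rightarrow> 'e) \<Rightarrow> bool" where
  "graph_morph G H fv fd \<longleftrightarrow>
     fv ` gverts G \<subseteq> gverts H \<and> fd ` gdarts G \<subseteq> gdarts H \<and>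
     (\<forall>d\<in>gdarts G. fd (grev G d) = grev H (fd d) \<and> fv (gterm G d) = gterm H (fd d))"

definition immersion ::
  "('v, 'd) sgraph \<Rightarrow> ('w, 'e) sgraph \<Rightarrow> ('v \<Rightarrow> 'w) \<Rightarrow> ('d \<Rightarrow> 'e) \<Rightarrow> bool" where
  "immersion G H fv fd \<longleftrightarrow> graph_morph G H fv fd \<and>
     (\<forall>d1\<in>gdarts G. \<forall>d2\<in>gdarts G.
        gterm G d1 = gterm G d2 \<and> fd d1 = fd d2 \<longrightarrow> d1 = d2)"

definition embedding ::
  "('v, 'd) sgraph \<Rightarrow> ('w, 'e) sgraph \<Rightarrow> ('v \<Rightarrow> 'w) \<Rightarrow> ('d \<Rightarrow> 'e) \<Rightarrow> bool" where
  "embedding G H fv fd \<longleftrightarrow> graph_morph G H fv fd \<and>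
     inj_on fv (gverts G) \<and> inj_on fd (gdarts G)"

definition graph_iso ::
  "('v, 'd) sgraph \<Rightarrow> ('w, 'e) sgraph \<Rightarrow> ('v \<Rightarrow> 'w) \<Rightarrow> ('d \<Rightarrow> 'e) \<Rightarrow> bool" where
  "graph_iso G H fv fd \<longleftrightarrow> embedding G H fv fd \<and>
     fv ` gverts G = gverts H \<and> fd ` gdarts G = gdarts H"

definition disj_union :: "'i set \<Rightarrow> ('i \<Rightarrow> ('v, 'd) sgraph) \<Rightarrow> ('i \<times> 'v, 'i \<times> 'd) sgraph" where
  "disj_union J E =
     \<lparr> gverts = (SIGMA j:J. gverts (E j)),
       gdarts = (SIGMA j:J. gdarts (E j)),
       grev = (\<lambda>(j, d). (j, grev (E j) d)),
       gterm = (\<lambda>(j, d). (j, gterm (E j) d)) \<rparr>"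

definition image_union ::
  "'i set \<Rightarrow> ('i \<Rightarrow> ('v, 'd) sgraph) \<Rightarrow> ('w, 'e) sgraph \<Rightarrow>
   ('i \<Rightarrow> 'v \<Rightarrow> 'w) \<Rightarrow> ('i \<Rightarrow> 'd \<Rightarrow> 'e) \<Rightarrow> ('w, 'e) sgraph" where
  "image_union J E V fv fd =
     \<lparr> gverts = (\<Union>j\<in>J. fv j ` gverts (E j)),
       gdarts = (\<Union>j\<in>J. fd j ` gdarts (E j)),
       grev = grev V,
       gterm = gterm V \<rparr>"

definition union_map_iso ::
  "'i set \<Rightarrow> ('i \<Rightarrow> ('v, 'd) sgraph) \<Rightarrow> ('w, 'e) sgraph \<Rightarrow>
   ('i \<Rightarrow> 'v \<Rightarrow> 'w) \<Rightarrow> ('i \<Rightarrow> 'd \<Rightarrow> 'e) \<Rightarrow> bool" where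
  "union_map_iso J E V fv fd \<longleftrightarrow>
     graph_iso (disj_union J E) (image_union J E V fv fd)
       (\<lambda>(j, x). fv j x) (\<lambda>(j, d). fd j d)"

text \<open>Local data at a vertex v of a 2-covered graph of spaces: the vertex space V,
the incident oriented edges indexed by I with edge spaces E i and immersions
(fv i, fd i) : E i \<rightarrow> V, such that every edge of V is the image of exactly two
edges of the disjoint union of the E i (counted via oriented edges).\<close>

definition two_covered_vertex ::
  "'i set \<Rightarrow> ('i \<Rightarrow> ('v, 'd) sgraph) \<Rightarrow> ('w, 'e) sgraph \<Rightarrow>
   ('i \<Rightarrow> 'v \<Rightarrow> 'w) \<Rightarrow> ('i \<Rightarrow> 'd \<Rightarrow> 'e) \<Rightarrow> bool" where
  "two_covered_vertex I E V fv fd \<longleftrightarrow>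
     finite I \<and> finite_graph V \<and> connected_graph V \<and>
     (\<forall>i\<in>I. finite_graph (E i) \<and> connected_graph (E i) \<and> immersion (E i) V (fv i) (fd i)) \<and>
     (\<forall>d\<in>gdarts V. card {(i, d'). i \<in> I \<and> d' \<in> gdarts (E i) \<and> fd i d' = d} = 2)"

definition unfoldable ::
  "'i set \<Rightarrow> ('i \<Rightarrow> ('v, 'd) sgraph) \<Rightarrow> ('w, 'e) sgraph \<Rightarrow>
   ('i \<Rightarrow> 'v \<Rightarrow> 'w) \<Rightarrow> ('i \<Rightarrow> 'd \<Rightarrow> 'e) \<Rightarrow> bool" where
  "unfoldable I E V fv fd \<longleftrightarrow>
     (\<forall>J\<subseteq>I. union_map_iso J E V fv fd \<or> union_map_iso (I - J) E V fv fd)"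

definition reducible ::
  "'i set \<Rightarrow> ('i \<Rightarrow> ('v, 'd) sgraph) \<Rightarrow> ('w, 'e) sgraph \<Rightarrow>
   ('i \<Rightarrow> 'v \<Rightarrow> 'w) \<Rightarrow> ('i \<Rightarrow> 'd \<Rightarrow> 'e) \<Rightarrow> bool" where
  "reducible I E V fv fd \<longleftrightarrow>
     card I = 2 \<and> (\<forall>i\<in>I. graph_iso (E i) V (fv i) (fd i))"

end

(*
  If some edge map is not an embedding, unfoldability applied to that single index
  makes the remaining edge spaces embed with pairwise disjoint images.

  Otherwise every edge of V is covered by exactly two distinct edge spaces. If no
  vertex of V lay in three images, the vertices common to two overlapping images
  would form a set closed under following edges, hence all of V by connectivity;
  then only those two edge spaces exist and both map onto V, so v would be
  reducible. Hence some vertex lies in the images of a, b, c. Unfoldability for each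
  of the pairs among a, b, c makes every further image disjoint from those three and
  from every other further image, which is impossible because each vertex of V is
  covered at least twice. So the index set is {a, b, c}.
*)

theory Submission
  imports Defs
begin

lemma inj_on_Sigma_imp_inj_on:
  assumes "inj_on (\<lambda>(j, x). f j x) (SIGMA j:J. A j)" "i \<in> J"
  shows "inj_on (f i) (A i)"
  using assms unfolding inj_on_def by fastforce

lemma inj_on_Sigma_disjoint_images:
  assumes "inj_on (\<lambda>(j, x). f j x) (SIGMA j:J. A j)" "i \<in> J" "j \<in> J" "i \<noteq> j"
  shows "f i ` A i \<inter> f j ` A j = {}"
  using assms unfolding inj_on_def by fastforce

lemma union_map_iso_inj_on:
  assumes "union_map_iso J E V fv fd"
  shows "inj_on (\<lambda>(j, x). fv j x) (SIGMA j:J. gverts (E j))"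
    and "inj_on (\<lambda>(j, d). fd j d) (SIGMA j:J. gdarts (E j))"
  using assms unfolding union_map_iso_def graph_iso_def embedding_def disj_union_def by auto

lemma union_map_iso_embedding:
  assumes "union_map_iso J E V fv fd" "i \<in> J" "graph_morph (E i) V (fv i) (fd i)"
  shows "embedding (E i) V (fv i) (fd i)"
  using assms inj_on_Sigma_imp_inj_on[OF union_map_iso_inj_on(1)[OF assms(1)]]
    inj_on_Sigma_imp_inj_on[OF union_map_iso_inj_on(2)[OF assms(1)]]
  unfolding embedding_def by blast

lemma union_map_iso_disjoint_images:
  assumes "union_map_iso J E V fv fd" "i \<in> J" "j \<in> J" "i \<noteq> j"
  shows "fv i ` gverts (E i) \<inter> fv j ` gverts (E j) = {}"
    and "fd i ` gdarts (E i) \<inter> fd j ` gdarts (E j) = {}"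
  using inj_on_Sigma_disjoint_images[OF union_map_iso_inj_on(1)[OF assms(1)] assms(2-4)]
    inj_on_Sigma_disjoint_images[OF union_map_iso_inj_on(2)[OF assms(1)] assms(2-4)]
  by auto

lemma graph_morph_gterm_in_image:
  assumes "wf_graph G" "graph_morph G H f g" "d \<in> gdarts G"
  shows "gterm H (g d) \<in> f ` gverts G"
  using assms unfolding wf_graph_def graph_morph_def by (metis image_eqI)

lemma graph_morph_ginit_in_image:
  assumes "wf_graph G" "graph_morph G H f g" "d \<in> gdarts G"
  shows "ginit H (g d) \<in> f ` gverts G"
proof -
  have "grev G d \<in> gdarts G" and "g (grev G d) = grev H (g d)"
    using assms unfolding wf_graph_def graph_morph_def by auto
  then show ?thesis
    using graph_morph_gterm_in_image[OF assms(1,2)] unfolding ginit_def by metis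
qed

lemma connected_graph_no_darts_eq:
  assumes "connected_graph G" "gdarts G = {}" "x \<in> gverts G" "y \<in> gverts G"
  shows "x = y"
proof -
  have "(x, y) \<in> {(ginit G d, gterm G d) | d. d \<in> gdarts G}\<^sup>*"
    using assms unfolding connected_graph_def by blast
  then show ?thesis using assms(2) by (cases rule: rtranclE) auto
qed

lemma connected_graph_vertex_is_gterm:
  assumes "wf_graph G" "connected_graph G" "gdarts G \<noteq> {}" "x \<in> gverts G"
  obtains d where "d \<in> gdarts G" "gterm G d = x"
proof -
  obtain d0 where d0: "d0 \<in> gdarts G" using assms(3) by blast
  then have "gterm G d0 \<in> gverts G" using assms(1) unfolding wf_graph_def by blast
  then have "(gterm G d0, x) \<in> {(ginit G d, gterm G d) | d. d \<in> gdarts G}\<^sup>*"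
    using assms(2,4) unfolding connected_graph_def by blast
  then show ?thesis using d0 that by (cases rule: rtranclE) blast+
qed

lemma connected_graph_dart_closed_subset:
  assumes "connected_graph G" "u \<in> gverts G" "u \<in> U"
    and closed: "\<And>d. d \<in> gdarts G \<Longrightarrow> ginit G d \<in> U \<Longrightarrow> gterm G d \<in> U"
  shows "gverts G \<subseteq> U"
proof
  fix x assume "x \<in> gverts G"
  then have "(u, x) \<in> {(ginit G d, gterm G d) | d. d \<in> gdarts G}\<^sup>*"
    using assms(1,2) unfolding connected_graph_def by blast
  then show "x \<in> U"
    by (induction rule: rtrancl_induct) (use assms(3) closed in auto)
qed

lemma unfoldable_compl:
  assumes "unfoldable I E V fv fd" "J \<subseteq> I" "\<not> union_map_iso J E V fv fd"
  shows "union_map_iso (I - J) E V fv fd"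
  using assms unfolding unfoldable_def by blast

locale two_covered =
  fixes I :: "'i set"
    and E :: "'i \<Rightarrow> ('v, 'd) sgraph"
    and V :: "('w, 'e) sgraph"
    and fv :: "'i \<Rightarrow> 'v \<Rightarrow> 'w"
    and fd :: "'i \<Rightarrow> 'd \<Rightarrow> 'e"
  assumes two_covered: "two_covered_vertex I E V fv fd"
begin

abbreviation vimg :: "'i \<Rightarrow> 'w set" where
  "vimg i \<equiv> fv i ` gverts (E i)"

abbreviation dimg :: "'i \<Rightarrow> 'e set" where
  "dimg i \<equiv> fd i ` gdarts (E i)"

lemma finite_I: "finite I"
  and wf_graph_V: "wf_graph V"
  and connected_V: "connected_graph V"
  and wf_graph_E: "i \<in> I \<Longrightarrow> wf_graph (E i)"
  and connected_E: "i \<in> I \<Longrightarrow> connected_graph (E i)"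
  and graph_morph_E: "i \<in> I \<Longrightarrow> graph_morph (E i) V (fv i) (fd i)"
  using two_covered unfolding two_covered_vertex_def finite_graph_def immersion_def by auto

lemma vimg_nonempty: "i \<in> I \<Longrightarrow> vimg i \<noteq> {}"
  using connected_E unfolding connected_graph_def by blast

lemma vimg_subset: "i \<in> I \<Longrightarrow> vimg i \<subseteq> gverts V"
  using graph_morph_E unfolding graph_morph_def by blast

lemma card_preimage_dart:
  "d \<in> gdarts V \<Longrightarrow> card {(i, d'). i \<in> I \<and> d' \<in> gdarts (E i) \<and> fd i d' = d} = 2"
  using two_covered unfolding two_covered_vertex_def by blast

lemma degenerate_if_not_embedding:
  assumes "unfoldable I E V fv fd" "i0 \<in> I" "\<not> embedding (E i0) V (fv i0) (fd i0)"
  shows "\<forall>i\<in>I - {i0}. embedding (E i) V (fv i) (fd i)"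
    and "\<forall>i\<in>I - {i0}. \<forall>j\<in>I - {i0}. i \<noteq> j \<longrightarrow>
           vimg i \<inter> vimg j = {} \<and> dimg i \<inter> dimg j = {}"
proof -
  have "\<not> union_map_iso {i0} E V fv fd"
    using union_map_iso_embedding[of "{i0}" E V fv fd i0] graph_morph_E assms(2,3) by blast
  then have iso: "union_map_iso (I - {i0}) E V fv fd"
    using unfoldable_compl[OF assms(1)] assms(2) by blast
  show "\<forall>i\<in>I - {i0}. embedding (E i) V (fv i) (fd i)"
    using union_map_iso_embedding[OF iso] graph_morph_E by blast
  show "\<forall>i\<in>I - {i0}. \<forall>j\<in>I - {i0}. i \<noteq> j \<longrightarrow>
          vimg i \<inter> vimg j = {} \<and> dimg i \<inter> dimg j = {}"
    using union_map_iso_disjoint_images[OF iso] by simp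
qed

lemma union_map_iso_compl_if_overlap:
  assumes "unfoldable I E V fv fd" "a \<in> I" "b \<in> I" "a \<noteq> b" "vimg a \<inter> vimg b \<noteq> {}"
  shows "union_map_iso (I - {a, b}) E V fv fd"
proof (rule unfoldable_compl)
  show "\<not> union_map_iso {a, b} E V fv fd"
    using union_map_iso_disjoint_images(1)[of "{a, b}" E V fv fd a b] assms(4,5) by blast
qed (use assms in auto)

definition triple_point :: "'w \<Rightarrow> bool" where
  "triple_point x \<longleftrightarrow> (\<exists>a\<in>I. \<exists>b\<in>I. \<exists>c\<in>I.
     a \<noteq> b \<and> a \<noteq> c \<and> b \<noteq> c \<and> x \<in> vimg a \<and> x \<in> vimg b \<and> x \<in> vimg c)"

end

locale two_covered_embedded = two_covered +
  assumes embedded: "i \<in> I \<Longrightarrow> embedding (E i) V (fv i) (fd i)"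
begin

lemma dart_in_two_images:
  assumes "d \<in> gdarts V"
  obtains p q where "p \<in> I" "q \<in> I" "p \<noteq> q" "d \<in> dimg p" "d \<in> dimg q"
proof -
  obtain x y where xy: "{(i, d'). i \<in> I \<and> d' \<in> gdarts (E i) \<and> fd i d' = d} = {x, y}" "x \<noteq> y"
    using card_preimage_dart[OF assms] by (auto simp: card_2_iff)
  obtain p d1 where x: "x = (p, d1)" by (cases x)
  obtain q d2 where y: "y = (q, d2)" by (cases y)
  have "(p, d1) \<in> {(i, d'). i \<in> I \<and> d' \<in> gdarts (E i) \<and> fd i d' = d}"
    and "(q, d2) \<in> {(i, d'). i \<in> I \<and> d' \<in> gdarts (E i) \<and> fd i d' = d}"
    unfolding xy(1) x y by simp_all
  then have p: "p \<in> I" "d1 \<in> gdarts (E p)" "fd p d1 = d"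
    and q: "q \<in> I" "d2 \<in> gdarts (E q)" "fd q d2 = d" by simp_all
  have "p \<noteq> q"
  proof
    assume "p = q"
    have "inj_on (fd p) (gdarts (E p))"
      using embedded[OF p(1)] unfolding embedding_def by blast
    with p q \<open>p = q\<close> have "d1 = d2" by (metis inj_onD)
    with \<open>p = q\<close> x y xy(2) show False by simp
  qed
  moreover have "d \<in> dimg p" using p(2,3) by blast
  moreover have "d \<in> dimg q" using q(2,3) by blast
  ultimately show ?thesis using p(1) q(1) that by blast
qed

lemma dart_ends_in_two_images:
  assumes "d \<in> gdarts V"
  obtains p q where "p \<in> I" "q \<in> I" "p \<noteq> q"
    "ginit V d \<in> vimg p" "ginit V d \<in> vimg q" "gterm V d \<in> vimg p" "gterm V d \<in> vimg q"
proof -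
  obtain p q where pq: "p \<in> I" "q \<in> I" "p \<noteq> q" "d \<in> dimg p" "d \<in> dimg q"
    using dart_in_two_images[OF assms] .
  have "ginit V d \<in> vimg i" "gterm V d \<in> vimg i" if "i \<in> I" "d \<in> dimg i" for i
    using that graph_morph_ginit_in_image[OF wf_graph_E graph_morph_E]
      graph_morph_gterm_in_image[OF wf_graph_E graph_morph_E] by auto
  with pq that show ?thesis by blast
qed

lemma vertex_in_two_images:
  assumes "gdarts V \<noteq> {}" "x \<in> gverts V"
  obtains p q where "p \<in> I" "q \<in> I" "p \<noteq> q" "x \<in> vimg p" "x \<in> vimg q"
proof -
  obtain d where "d \<in> gdarts V" "gterm V d = x"
    using connected_graph_vertex_is_gterm[OF wf_graph_V connected_V assms] .
  then show ?thesis using dart_ends_in_two_images that by metis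
qed

lemma double_point_exists:
  assumes "card I \<ge> 2 \<or> gdarts V \<noteq> {}"
  obtains a b u where "a \<in> I" "b \<in> I" "a \<noteq> b" "u \<in> vimg a" "u \<in> vimg b"
proof (cases "gdarts V = {}")
  case False
  have "gverts V \<noteq> {}" using connected_V by (simp add: connected_graph_def)
  then obtain x where "x \<in> gverts V" by blast
  then show ?thesis using vertex_in_two_images[OF False] that by metis
next
  case True
  with assms have "\<not> card I \<le> Suc 0" by auto
  then obtain a b where ab: "a \<in> I" "b \<in> I" "a \<noteq> b"
    using card_le_Suc0_iff_eq[OF finite_I] by blast
  obtain u where u: "u \<in> vimg a" using vimg_nonempty[OF ab(1)] by blast
  obtain u' where u': "u' \<in> vimg b" using vimg_nonempty[OF ab(2)] by blast
  have "u = u'"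
    using connected_graph_no_darts_eq[OF connected_V True] vimg_subset ab(1,2) u u' by blast
  with ab u u' that show ?thesis by blast
qed

lemma double_point_spreads:
  assumes "\<not> (\<exists>x. triple_point x)" "a \<in> I" "b \<in> I" "a \<noteq> b" "u \<in> vimg a" "u \<in> vimg b"
  shows "gverts V \<subseteq> vimg a \<inter> vimg b"
proof (rule connected_graph_dart_closed_subset[OF connected_V])
  show "u \<in> gverts V" using vimg_subset assms by blast
  show "u \<in> vimg a \<inter> vimg b" using assms by blast
next
  fix d assume d: "d \<in> gdarts V" "ginit V d \<in> vimg a \<inter> vimg b"
  obtain p q where pq: "p \<in> I" "q \<in> I" "p \<noteq> q"
    "ginit V d \<in> vimg p" "ginit V d \<in> vimg q" "gterm V d \<in> vimg p" "gterm V d \<in> vimg q"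
    using dart_ends_in_two_images[OF d(1)] .
  \<comment> \<open>A third index through the double point ginit V d would make it a triple point.\<close>
  have "p \<in> {a, b}" "q \<in> {a, b}"
    using assms(1-4) d(2) pq unfolding triple_point_def by blast+
  with pq show "gterm V d \<in> vimg a \<inter> vimg b" by blast
qed

lemma dimg_eq_if_two_indices:
  assumes "I = {a, b}" "a \<noteq> b" "i \<in> I"
  shows "dimg i = gdarts V"
proof
  show "dimg i \<subseteq> gdarts V" using graph_morph_E assms(3) unfolding graph_morph_def by blast
  show "gdarts V \<subseteq> dimg i"
  proof
    fix d assume "d \<in> gdarts V"
    then obtain p q where "p \<in> I" "q \<in> I" "p \<noteq> q" "d \<in> dimg p" "d \<in> dimg q"
      using dart_in_two_images by metis
    with assms show "d \<in> dimg i" by blast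
  qed
qed

lemma reducible_if_no_triple_point:
  assumes "card I \<ge> 2 \<or> gdarts V \<noteq> {}" "\<not> (\<exists>x. triple_point x)"
  shows "reducible I E V fv fd"
proof -
  obtain a b u where ab: "a \<in> I" "b \<in> I" "a \<noteq> b" "u \<in> vimg a" "u \<in> vimg b"
    using double_point_exists[OF assms(1)] .
  have spread: "gverts V \<subseteq> vimg a \<inter> vimg b"
    using double_point_spreads[OF assms(2) ab] .
  have I: "I = {a, b}"
  proof (rule ccontr)
    assume "I \<noteq> {a, b}"
    then obtain k where k: "k \<in> I" "k \<notin> {a, b}" using ab by blast
    obtain x where x: "x \<in> vimg k" using vimg_nonempty[OF k(1)] by blast
    then have "x \<in> vimg a \<inter> vimg b" using spread vimg_subset[OF k(1)] by blast
    then have "triple_point x"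
      using ab(1-3) k x unfolding triple_point_def by blast
    with assms(2) show False by blast
  qed
  have "graph_iso (E i) V (fv i) (fd i)" if i: "i \<in> I" for i
  proof -
    have "vimg i = gverts V" using spread vimg_subset[OF i] i I by blast
    then show ?thesis
      using embedded[OF i] dimg_eq_if_two_indices[OF I ab(3) i] unfolding graph_iso_def by blast
  qed
  with I ab(3) show ?thesis unfolding reducible_def by simp
qed

lemma index_set_eq_if_triple_point:
  assumes unf: "unfoldable I E V fv fd"
    and abc: "a \<in> I" "b \<in> I" "c \<in> I" "a \<noteq> b" "a \<noteq> c" "b \<noteq> c"
    and w: "w \<in> vimg a" "w \<in> vimg b" "w \<in> vimg c"
  shows "I = {a, b, c}"
proof (rule ccontr)
  assume "I \<noteq> {a, b, c}"
  then obtain k where k: "k \<in> I" "k \<notin> {a, b, c}" using abc by blast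
  have iso_ab: "union_map_iso (I - {a, b}) E V fv fd"
    and iso_bc: "union_map_iso (I - {b, c}) E V fv fd"
    and iso_ac: "union_map_iso (I - {a, c}) E V fv fd"
    using union_map_iso_compl_if_overlap[OF unf] abc w by blast+
  have disj: "vimg k \<inter> vimg i = {}" if "i \<in> {a, b, c}" for i
    using that k abc union_map_iso_disjoint_images(1)[OF iso_bc, of k a]
      union_map_iso_disjoint_images(1)[OF iso_ac, of k b]
      union_map_iso_disjoint_images(1)[OF iso_ab, of k c] by auto
  obtain x where x: "x \<in> vimg k" using vimg_nonempty[OF k(1)] by blast
  then have xV: "x \<in> gverts V" using vimg_subset k by blast
  obtain m where m: "m \<in> I" "m \<noteq> k" "x \<in> vimg m"
  proof (cases "gdarts V = {}")
    case True
    then have "x = w"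
      using connected_graph_no_darts_eq[OF connected_V True xV] vimg_subset abc w by blast
    then show ?thesis using that abc k w by blast
  next
    case False
    then show ?thesis using vertex_in_two_images[OF False xV] that by metis
  qed
  have "m \<notin> {a, b, c}" using disj m x by blast
  then show False
    using union_map_iso_disjoint_images(1)[OF iso_ab, of k m] k m x by blast
qed


lemma three_images_with_common_vertex:
  assumes "unfoldable I E V fv fd" "\<not> reducible I E V fv fd" "card I \<ge> 2 \<or> gdarts V \<noteq> {}"
  obtains w where "w \<in> gverts V" "card I = 3" "\<forall>i\<in>I. w \<in> vimg i"
proof -
  obtain w a b c where abc: "a \<in> I" "b \<in> I" "c \<in> I" "a \<noteq> b" "a \<noteq> c" "b \<noteq> c"
    and w: "w \<in> vimg a" "w \<in> vimg b" "w \<in> vimg c"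
    using reducible_if_no_triple_point[OF assms(3)] assms(2) unfolding triple_point_def by blast
  have I: "I = {a, b, c}" using index_set_eq_if_triple_point[OF assms(1) abc w] .
  show ?thesis
  proof (rule that)
    show "w \<in> gverts V" using vimg_subset abc(1) w(1) by blast
    show "card I = 3" using I abc(4-6) by simp
    show "\<forall>i\<in>I. w \<in> vimg i" using I w by blast
  qed
qed

end

theorem lemma3p1:
  fixes I :: "'i set"
    and E :: "'i \<Rightarrow> ('v, 'd) sgraph"
    and V :: "('w, 'e) sgraph"
    and fv :: "'i \<Rightarrow> 'v \<Rightarrow> 'w"
    and fd :: "'i \<Rightarrow> 'd \<Rightarrow> 'e"
  assumes cov: "two_covered_vertex I E V fv fd"
    and nonempty: "card I \<ge> 1"
    and unf: "unfoldable I E V fv fd"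
    and nred: "\<not> reducible I E V fv fd"
    and one: "card I = 1 \<longrightarrow> gdarts V \<noteq> {}"
  shows
    "(let degenerate =
          (\<exists>i0\<in>I. \<not> embedding (E i0) V (fv i0) (fd i0) \<and>
             (\<forall>i\<in>I - {i0}. embedding (E i) V (fv i) (fd i)) \<and>
             (\<forall>i\<in>I - {i0}. \<forall>j\<in>I - {i0}. i \<noteq> j \<longrightarrow>
                 fv i ` gverts (E i) \<inter> fv j ` gverts (E j) = {} \<and>
                 fd i ` gdarts (E i) \<inter> fd j ` gdarts (E j) = {}));
          nondegenerate =
          (card I = 3 \<and>
             (\<forall>i\<in>I. embedding (E i) V (fv i) (fd i)) \<and>
             (\<forall>i\<in>I. \<forall>j\<in>I. fv i ` gverts (E i) \<inter> fv j ` gverts (E j) \<noteq> {}) \<and>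
             (\<exists>x\<in>gverts V. \<forall>i\<in>I. x \<in> fv i ` gverts (E i)))
     in (degenerate \<and> \<not> nondegenerate) \<or> (nondegenerate \<and> \<not> degenerate))"
proof -
  interpret two_covered I E V fv fd using cov by (rule two_covered.intro)
  show ?thesis
  proof (cases "\<forall>i\<in>I. embedding (E i) V (fv i) (fd i)")
    case False
    then obtain i0 where i0: "i0 \<in> I" "\<not> embedding (E i0) V (fv i0) (fd i0)" by blast
    show ?thesis
      unfolding Let_def
      by (intro disjI1 conjI bexI[of _ i0]) (use i0 degenerate_if_not_embedding[OF unf i0] in auto)
  next
    case True
    interpret two_covered_embedded I E V fv fd by unfold_locales (use True in blast)
    have "card I \<ge> 2 \<or> gdarts V \<noteq> {}" using nonempty one by auto
    then obtain w where w: "w \<in> gverts V" "card I = 3" "\<forall>i\<in>I. w \<in> vimg i"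
      using three_images_with_common_vertex[OF unf nred] by blast
    then have "\<forall>i\<in>I. \<forall>j\<in>I. vimg i \<inter> vimg j \<noteq> {}" by (metis IntI empty_iff)
    then show ?thesis
      unfolding Let_def using w True by (intro disjI2 conjI bexI[of _ w]) simp_all
  qed
qed

end
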